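(* Let $T$ be a bounded linear operator on a complex Banach space $X$ with spectrum $\sigma(T)=\{1\}$. Then $\mathcal{E}(T)\cap\mathcal{E}(T^{-1})=\{0\}$.
   Context: For a bounded linear operator $S$ on $X$, $\mathcal{E}(S)=\{x\in X:S^nx\to0\text{ as }n\to\infty\}$. (Here $T$ is invertible since $0\notin\sigma(T)$.) *)

theory Defs
  imports "HOL-Analysis.Analysis"
begin

text \<open>Complex vector spaces: a real vector space with a compatible complex scalar
  multiplication (the library only provides real normed spaces).\<close>

class complex_vector = real_vector +
  fixes scaleC :: "complex \<Rightarrow> 'a \<Rightarrow> 'a" (infixr \<open>*\<^sub>C\<close> 75)
  assumes scaleC_add_right: "a *\<^sub>C (x + y) = a *\<^sub>C x + a *\<^sub>C y"
    and scaleC_add_left: "(a + b) *\<^sub>C x = a *\<^sub>C x + b *\<^sub>C x"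
    and scaleC_scaleC: "a *\<^sub>C (b *\<^sub>C x) = (a * b) *\<^sub>C x"
    and scaleC_one: "1 *\<^sub>C x = x"
    and scaleR_scaleC: "scaleR r x = (complex_of_real r) *\<^sub>C x"

class complex_normed_vector = complex_vector + real_normed_vector +
  assumes norm_scaleC: "norm (a *\<^sub>C x) = cmod a * norm x"

definition bounded_clinear :: "('a::complex_normed_vector \<Rightarrow> 'b::complex_normed_vector) \<Rightarrow> bool" where
  "bounded_clinear T \<longleftrightarrow> bounded_linear T \<and> (\<forall>c x. T (c *\<^sub>C x) = c *\<^sub>C T x)"

definition op_invertible :: "('a::complex_normed_vector \<Rightarrow> 'a) \<Rightarrow> bool" where
  "op_invertible T \<longleftrightarrow> (\<exists>S. bounded_clinear S \<and> S \<circ> T = id \<and> T \<circ> S = id)"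

definition spectrum :: "('a::complex_normed_vector \<Rightarrow> 'a) \<Rightarrow> complex set" where
  "spectrum T = {z. \<not> op_invertible (\<lambda>x. T x - z *\<^sub>C x)}"

text \<open>E(S) = {x. S^n x \<rightarrow> 0}.\<close>
definition decay_set :: "('a::real_normed_vector \<Rightarrow> 'a) \<Rightarrow> 'a set" where
  "decay_set S = {x. (\<lambda>n. (S ^^ n) x) \<longlonglongrightarrow> 0}"

end

theory Submission
  imports Defs "HOL-Complex_Analysis.Complex_Analysis"
begin

text \<open>
  Let \<open>x\<close> decay under both \<open>T\<close> and \<open>T\<^sup>-\<^sup>1\<close>, let \<open>R z = (T - z)\<^sup>-\<^sup>1\<close> and let \<open>\<phi>\<close> be a bounded
  functional. Iterating \<open>R z T = I + z R z\<close> expands \<open>R z x\<close> in powers of \<open>1/z\<close> with coefficients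
  \<open>T\<^sup>n x\<close> outside the unit circle and in powers of \<open>z\<close> with coefficients \<open>T\<^sup>-\<^sup>n\<^sup>-\<^sup>1 x\<close> inside it; as the
  coefficients tend to \<open>0\<close>, an Abel-mean argument gives \<open>(|z| - 1) \<parallel>R z x\<parallel> \<rightarrow> 0\<close> as \<open>z \<rightarrow> 1\<close>.
  Cauchy estimates on small circles around points near \<open>1\<close> then show that the singularity of the
  holomorphic function \<open>\<phi> (R z x)\<close> at \<open>1\<close> is removable; since it vanishes at infinity, Liouville's
  theorem makes it \<open>0\<close>. Finally \<open>\<phi> x = \<phi> (T (R z x)) - z \<phi> (R z x) \<rightarrow> 0\<close> as \<open>z \<rightarrow> \<infinity>\<close>, so \<open>\<phi> x = 0\<close>
  for every \<open>\<phi>\<close>, and \<open>x = 0\<close> by Hahn--Banach.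
\<close>

section \<open>Complex normed vector spaces\<close>

instantiation complex :: complex_normed_vector
begin
definition scaleC_complex :: "complex \<Rightarrow> complex \<Rightarrow> complex" where
  "scaleC_complex = (*)"
instance
  by standard (auto simp: scaleC_complex_def scaleR_conv_of_real algebra_simps norm_mult)
end

lemma scaleC_zero_left [simp]: "0 *\<^sub>C (x::'a::complex_vector) = 0"
  using scaleR_scaleC[of 0 x] by simp

lemma scaleC_minus1_left [simp]: "(-1) *\<^sub>C (x::'a::complex_vector) = - x"
  using scaleR_scaleC[of "-1" x] by simp

lemma scaleC_of_real: "complex_of_real r *\<^sub>C (x::'a::complex_vector) = r *\<^sub>R x"
  by (simp add: scaleR_scaleC)

lemma scaleC_minus_left: "(- a) *\<^sub>C (x::'a::complex_vector) = - (a *\<^sub>C x)"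
  by (metis minus_mult_commute mult_1 scaleC_minus1_left scaleC_scaleC)

lemma scaleC_diff_left: "(a - b) *\<^sub>C (x::'a::complex_vector) = a *\<^sub>C x - b *\<^sub>C x"
  by (metis diff_conv_add_uminus scaleC_add_left scaleC_minus_left)

lemma bounded_clinear_imp_bounded_linear: "bounded_clinear f \<Longrightarrow> bounded_linear f"
  by (simp add: bounded_clinear_def)

lemma bounded_clinear_imp_linear: "bounded_clinear f \<Longrightarrow> linear f"
  by (simp add: bounded_clinear_def bounded_linear.linear)

lemma bounded_clinear_scaleC: "bounded_clinear f \<Longrightarrow> f (c *\<^sub>C x) = c *\<^sub>C f x"
  by (simp add: bounded_clinear_def)

lemma bounded_clinear_compose:
  "bounded_clinear f \<Longrightarrow> bounded_clinear g \<Longrightarrow> bounded_clinear (\<lambda>x. f (g x))"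
  by (simp add: bounded_clinear_def bounded_linear_compose)

section \<open>Hahn--Banach for normed spaces\<close>

text \<open>Partial functionals are represented by their graphs, so that a chain of extensions is
  bounded by its union.\<close>

definition norming_graph :: "'a::real_normed_vector \<Rightarrow> ('a \<times> real) set \<Rightarrow> bool" where
  "norming_graph x G \<longleftrightarrow> (x, norm x) \<in> G
     \<and> (\<forall>u r s. (u, r) \<in> G \<longrightarrow> (u, s) \<in> G \<longrightarrow> r = s)
     \<and> (\<forall>u r v s. (u, r) \<in> G \<longrightarrow> (v, s) \<in> G \<longrightarrow> (u + v, r + s) \<in> G)
     \<and> (\<forall>u r c. (u, r) \<in> G \<longrightarrow> (c *\<^sub>R u, c * r) \<in> G)
     \<and> (\<forall>u r. (u, r) \<in> G \<longrightarrow> r \<le> norm u)"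

lemma norming_graph_line:
  fixes x :: "'a::real_normed_vector"
  assumes "x \<noteq> 0"
  shows "norming_graph x {(t *\<^sub>R x, t * norm x) | t. True}"
proof -
  have "t * norm x \<le> norm (t *\<^sub>R x)" for t
    by (simp add: mult_right_mono)
  then show ?thesis
    using assms unfolding norming_graph_def
    by (auto simp: algebra_simps intro: exI[of _ 1] exI[of _ "_ + _"] exI[of _ "_ * _"])
qed

lemma norming_graph_Union_chain:
  assumes "C \<in> chains {G. norming_graph x G}" "C \<noteq> {}"
  shows "norming_graph x (\<Union>C)"
proof -
  have graphs: "\<And>G. G \<in> C \<Longrightarrow> norming_graph x G"
    using assms(1) by (auto simp: chains_def)
  have common: "\<exists>G\<in>C. a \<in> G \<and> b \<in> G" if "a \<in> \<Union>C" "b \<in> \<Union>C" for a b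
    using that assms(1) unfolding chains_def chain_subset_def by blast
  show ?thesis
    unfolding norming_graph_def
  proof (intro conjI allI impI)
    show "(x, norm x) \<in> \<Union>C"
      using assms(2) graphs unfolding norming_graph_def by blast
  next
    fix u r s assume "(u, r) \<in> \<Union>C" "(u, s) \<in> \<Union>C"
    then show "r = s"
      using common graphs unfolding norming_graph_def by metis
  next
    fix u r v s assume "(u, r) \<in> \<Union>C" "(v, s) \<in> \<Union>C"
    then show "(u + v, r + s) \<in> \<Union>C"
      using common graphs unfolding norming_graph_def by (metis UnionI)
  next
    fix u r c assume "(u, r) \<in> \<Union>C"
    then show "(c *\<^sub>R u, c * r) \<in> \<Union>C"
      using graphs unfolding norming_graph_def by blast
  next
    fix u r assume "(u, r) \<in> \<Union>C"
    then show "r \<le> norm u"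
      using graphs unfolding norming_graph_def by blast
  qed
qed

lemma norming_graph_zero: "norming_graph x G \<Longrightarrow> (0, 0) \<in> G"
  unfolding norming_graph_def by (metis mult_zero_left scaleR_zero_left)

lemma norming_graph_extension_value:
  assumes "norming_graph x G"
  obtains c where "\<And>v s. (v, s) \<in> G \<Longrightarrow> s - norm (v - y) \<le> c"
    and "\<And>v s. (v, s) \<in> G \<Longrightarrow> c \<le> norm (v + y) - s"
proof -
  have key: "s - norm (v - y) \<le> norm (v' + y) - s'" if "(v, s) \<in> G" "(v', s') \<in> G" for v s v' s'
  proof -
    have "s + s' \<le> norm (v + v')"
      using assms that unfolding norming_graph_def by blast
    also have "\<dots> \<le> norm (v - y) + norm (v' + y)"
      using norm_triangle_ineq[of "v - y" "v' + y"] by simp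
    finally show ?thesis by simp
  qed
  define L where "L = (\<lambda>(v, s). s - norm (v - y)) ` G"
  have "L \<noteq> {}" using norming_graph_zero[OF assms] by (auto simp: L_def)
  moreover have "bdd_above L"
    using key[OF _ norming_graph_zero[OF assms]] by (force simp: L_def bdd_above_def)
  ultimately show ?thesis
    using key by (intro that[of "Sup L"] cSup_upper cSup_least) (force simp: L_def)+
qed

lemma norming_graph_extension_dominated:
  assumes G: "norming_graph x G" and "(u, r) \<in> G"
    and lower: "\<And>v s. (v, s) \<in> G \<Longrightarrow> s - norm (v - y) \<le> c"
    and upper: "\<And>v s. (v, s) \<in> G \<Longrightarrow> c \<le> norm (v + y) - s"
  shows "r + t * c \<le> norm (u + t *\<^sub>R y)"
proof -
  have scaled: "(a *\<^sub>R u, a * r) \<in> G" for a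
    using G \<open>(u, r) \<in> G\<close> unfolding norming_graph_def by blast
  consider "t = 0" | "t > 0" | "t < 0" by linarith
  then show ?thesis
  proof cases
    case 1
    then show ?thesis using G \<open>(u, r) \<in> G\<close> unfolding norming_graph_def by simp
  next
    case 2
    have "t * c \<le> t * (norm ((1/t) *\<^sub>R u + y) - (1/t) * r)"
      using 2 upper[OF scaled[of "1/t"]] by (intro mult_left_mono) auto
    also have "\<dots> = norm (t *\<^sub>R ((1/t) *\<^sub>R u + y)) - r"
      using 2 by (simp add: right_diff_distrib)
    also have "t *\<^sub>R ((1/t) *\<^sub>R u + y) = u + t *\<^sub>R y"
      using 2 by (simp add: algebra_simps)
    finally show ?thesis by simp
  next
    case 3
    define w where "w = (- 1/t) *\<^sub>R u - y"
    have "r - norm (u + t *\<^sub>R y) = r - norm ((- t) *\<^sub>R w)"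
      using 3 by (simp add: w_def algebra_simps)
    also have "\<dots> = (- t) * ((- 1/t) * r - norm w)"
      using 3 by (simp add: right_diff_distrib)
    also have "\<dots> \<le> (- t) * c"
      using 3 lower[OF scaled[of "-1/t"]] by (intro mult_left_mono) (auto simp: w_def)
    finally show ?thesis by simp
  qed
qed

definition graph_extension :: "('a::real_vector \<times> real) set \<Rightarrow> 'a \<Rightarrow> real \<Rightarrow> ('a \<times> real) set" where
  "graph_extension G y c = {(u + t *\<^sub>R y, r + t * c) | u r t. (u, r) \<in> G}"

lemma graph_extension_coordinates_unique:
  assumes G: "norming_graph x G" and y: "y \<notin> fst ` G"
    and "(u, r) \<in> G" "(u', r') \<in> G" "u + t *\<^sub>R y = u' + t' *\<^sub>R y"
  shows "t = t'"
proof (rule ccontr)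
  assume "t \<noteq> t'"
  have "(u + (-1) *\<^sub>R u', r + (-1) * r') \<in> G"
    using G assms(3,4) unfolding norming_graph_def by blast
  then have "((1 / (t' - t)) *\<^sub>R (u - u'), (1 / (t' - t)) * (r - r')) \<in> G"
    using G unfolding norming_graph_def by (metis (no_types) scaleR_minus1_left mult_minus1 diff_conv_add_uminus)
  moreover have "u - u' = (t' - t) *\<^sub>R y"
    using assms(5) by (simp add: algebra_simps)
  ultimately have "(y, (1 / (t' - t)) * (r - r')) \<in> G"
    using \<open>t \<noteq> t'\<close> by simp
  then show False
    using y by force
qed

lemma subset_graph_extension: "G \<subseteq> graph_extension G y c"
  unfolding graph_extension_def by force

lemma norming_graph_graph_extension:
  assumes G: "norming_graph x G" and y: "y \<notin> fst ` G"
    and lower: "\<And>v s. (v, s) \<in> G \<Longrightarrow> s - norm (v - y) \<le> c"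
    and upper: "\<And>v s. (v, s) \<in> G \<Longrightarrow> c \<le> norm (v + y) - s"
  shows "norming_graph x (graph_extension G y c)"
  unfolding norming_graph_def
proof (intro conjI allI impI)
  have single_valued: "\<And>u r s. (u, r) \<in> G \<Longrightarrow> (u, s) \<in> G \<Longrightarrow> r = s"
    and add: "\<And>u r v s. (u, r) \<in> G \<Longrightarrow> (v, s) \<in> G \<Longrightarrow> (u + v, r + s) \<in> G"
    and scale: "\<And>u r a. (u, r) \<in> G \<Longrightarrow> (a *\<^sub>R u, a * r) \<in> G"
    using G unfolding norming_graph_def by blast+
  show "(x, norm x) \<in> graph_extension G y c"
    using G subset_graph_extension unfolding norming_graph_def by blast
  show "r1 = r2" if mem: "(w, r1) \<in> graph_extension G y c" "(w, r2) \<in> graph_extension G y c" for w r1 r2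
  proof -
    obtain u r t u' r' t' where A: "(u, r) \<in> G" "(u', r') \<in> G"
      "w = u + t *\<^sub>R y" "r1 = r + t * c" "w = u' + t' *\<^sub>R y" "r2 = r' + t' * c"
      using mem unfolding graph_extension_def by blast
    then have "t = t'"
      using graph_extension_coordinates_unique[OF G y] by metis
    then show ?thesis
      using A single_valued by auto
  qed
  show "(w1 + w2, r1 + r2) \<in> graph_extension G y c"
    if mem: "(w1, r1) \<in> graph_extension G y c" "(w2, r2) \<in> graph_extension G y c" for w1 r1 w2 r2
  proof -
    obtain u r t u' r' t' where "(u, r) \<in> G" "(u', r') \<in> G"
      "w1 = u + t *\<^sub>R y" "r1 = r + t * c" "w2 = u' + t' *\<^sub>R y" "r2 = r' + t' * c"
      using mem unfolding graph_extension_def by blast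
    moreover from this have "w1 + w2 = (u + u') + (t + t') *\<^sub>R y" "r1 + r2 = (r + r') + (t + t') * c"
      by (simp_all add: algebra_simps)
    ultimately show ?thesis
      unfolding graph_extension_def using add by blast
  qed
  show "(a *\<^sub>R w, a * r1) \<in> graph_extension G y c" if mem: "(w, r1) \<in> graph_extension G y c" for w r1 a
  proof -
    obtain u r t where "(u, r) \<in> G" "w = u + t *\<^sub>R y" "r1 = r + t * c"
      using mem unfolding graph_extension_def by blast
    moreover from this have "a *\<^sub>R w = a *\<^sub>R u + (a * t) *\<^sub>R y" "a * r1 = a * r + (a * t) * c"
      by (simp_all add: algebra_simps)
    ultimately show ?thesis
      unfolding graph_extension_def using scale by blast
  qed
  show "r1 \<le> norm w" if "(w, r1) \<in> graph_extension G y c" for w r1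
    using that norming_graph_extension_dominated[OF G _ lower upper] unfolding graph_extension_def by blast
qed

lemma norming_graph_extend:
  assumes G: "norming_graph x G" and y: "y \<notin> fst ` G"
  shows "\<exists>G'. norming_graph x G' \<and> G \<subset> G'"
proof -
  obtain c where lower: "\<And>v s. (v, s) \<in> G \<Longrightarrow> s - norm (v - y) \<le> c"
    and upper: "\<And>v s. (v, s) \<in> G \<Longrightarrow> c \<le> norm (v + y) - s"
    using norming_graph_extension_value[OF G] by blast
  have "(0 + 1 *\<^sub>R y, 0 + 1 * c) \<in> graph_extension G y c"
    using norming_graph_zero[OF G] unfolding graph_extension_def by blast
  moreover have "(y, c) \<notin> G"
    using y by force
  ultimately have "(y, c) \<in> graph_extension G y c - G"
    by simp
  then have "G \<subset> graph_extension G y c"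
    using subset_graph_extension by blast
  with norming_graph_graph_extension[OF G y lower upper] show ?thesis
    by blast
qed

lemma exists_total_norming_graph:
  assumes "x \<noteq> 0"
  obtains M where "norming_graph x M" "\<And>v. \<exists>r. (v, r) \<in> M"
proof -
  define \<G> where "\<G> = {G. norming_graph x G}"
  have "\<forall>C\<in>chains \<G>. \<exists>U\<in>\<G>. \<forall>X\<in>C. X \<subseteq> U"
  proof
    fix C assume C: "C \<in> chains \<G>"
    show "\<exists>U\<in>\<G>. \<forall>X\<in>C. X \<subseteq> U"
    proof (cases "C = {}")
      case True
      then show ?thesis
        using norming_graph_line[OF assms] unfolding \<G>_def by blast
    next
      case False
      then show ?thesis
        using norming_graph_Union_chain C unfolding \<G>_def by blast
    qed
  qed
  from Zorn_Lemma2[OF this] obtain M where "M \<in> \<G>" and maximal: "\<forall>G\<in>\<G>. M \<subseteq> G \<longrightarrow> G = M"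
    by blast
  then have M: "norming_graph x M"
    unfolding \<G>_def by simp
  moreover have "\<exists>r. (v, r) \<in> M" for v
  proof (rule ccontr)
    assume "\<nexists>r. (v, r) \<in> M"
    then have "v \<notin> fst ` M"
      by force
    then show False
      using norming_graph_extend[OF M] maximal unfolding \<G>_def by blast
  qed
  ultimately show ?thesis
    using that by blast
qed

lemma exists_norming_functional_real:
  fixes x :: "'a::real_normed_vector"
  assumes "x \<noteq> 0"
  obtains \<psi> where "linear \<psi>" "\<And>v. \<bar>\<psi> v\<bar> \<le> norm v" "\<psi> x = norm x"
proof -
  obtain M where M: "norming_graph x M" and total: "\<And>v. \<exists>r. (v, r) \<in> M"
    using exists_total_norming_graph[OF assms] by blast
  define \<psi> where "\<psi> v = (THE r. (v, r) \<in> M)" for v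
  have \<psi>_eq: "\<psi> v = r \<longleftrightarrow> (v, r) \<in> M" for v r
  proof -
    have "\<exists>!r. (v, r) \<in> M"
      using total M unfolding norming_graph_def by blast
    then show ?thesis
      unfolding \<psi>_def by (auto intro: the1_equality theI')
  qed
  then have in_M: "(v, \<psi> v) \<in> M" for v
    by blast
  have "linear \<psi>"
  proof (rule linearI)
    show "\<psi> (v + w) = \<psi> v + \<psi> w" for v w
      using M in_M \<psi>_eq unfolding norming_graph_def by blast
    show "\<psi> (a *\<^sub>R v) = a *\<^sub>R \<psi> v" for a v
      using M in_M \<psi>_eq unfolding norming_graph_def by simp
  qed
  moreover have "\<bar>\<psi> v\<bar> \<le> norm v" for v
  proof -
    have "\<psi> v \<le> norm v" "\<psi> (- v) \<le> norm (- v)"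
      using M in_M unfolding norming_graph_def by blast+
    then show ?thesis
      using linear_neg[OF \<open>linear \<psi>\<close>, of v] by simp
  qed
  moreover have "\<psi> x = norm x"
    using M \<psi>_eq unfolding norming_graph_def by blast
  ultimately show ?thesis
    by (rule that)
qed

lemma bounded_clinear_complexification:
  fixes \<psi> :: "'a::complex_normed_vector \<Rightarrow> real"
  assumes \<psi>: "linear \<psi>" "\<And>v. \<bar>\<psi> v\<bar> \<le> norm v"
  shows "bounded_clinear (\<lambda>v. complex_of_real (\<psi> v) - \<i> * complex_of_real (\<psi> (\<i> *\<^sub>C v)))"
proof -
  define \<phi> where "\<phi> v = complex_of_real (\<psi> v) - \<i> * complex_of_real (\<psi> (\<i> *\<^sub>C v))" for v
  have i_scaleR: "\<i> *\<^sub>C (r *\<^sub>R v) = r *\<^sub>R (\<i> *\<^sub>C v)" for r v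
    by (simp add: scaleR_scaleC scaleC_scaleC mult.commute)
  have "bounded_linear \<phi>"
  proof (rule bounded_linear_intro[of _ 2])
    show "\<phi> (v + w) = \<phi> v + \<phi> w" for v w
      unfolding \<phi>_def by (simp add: linear_add[OF \<psi>(1)] scaleC_add_right algebra_simps)
    show "\<phi> (r *\<^sub>R v) = r *\<^sub>R \<phi> v" for r v
      unfolding \<phi>_def by (simp add: i_scaleR linear_scale[OF \<psi>(1)] scaleR_conv_of_real algebra_simps)
    show "norm (\<phi> v) \<le> norm v * 2" for v
    proof -
      have "norm (\<phi> v) \<le> \<bar>\<psi> v\<bar> + \<bar>\<psi> (\<i> *\<^sub>C v)\<bar>"
        unfolding \<phi>_def using norm_triangle_ineq4 by (metis norm_ii norm_mult norm_of_real mult_1)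
      also have "\<dots> \<le> norm v + norm (\<i> *\<^sub>C v)"
        using \<psi>(2) by (intro add_mono)
      finally show ?thesis
        by (simp add: norm_scaleC)
    qed
  qed
  moreover have "\<phi> (c *\<^sub>C v) = c * \<phi> v" for c v
  proof -
    have "\<phi> (\<i> *\<^sub>C v) = \<i> * \<phi> v" for v
      unfolding \<phi>_def by (simp add: scaleC_scaleC linear_neg[OF \<psi>(1)] algebra_simps)
    moreover have "\<phi> (complex_of_real r *\<^sub>C v) = complex_of_real r * \<phi> v" for r v
      using \<open>bounded_linear \<phi>\<close> by (simp add: scaleC_of_real linear_scale bounded_linear.linear scaleR_conv_of_real)
    moreover have "c *\<^sub>C v = complex_of_real (Re c) *\<^sub>C v + \<i> *\<^sub>C (complex_of_real (Im c) *\<^sub>C v)"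
      by (simp add: scaleC_scaleC flip: scaleC_add_left complex_eq)
    ultimately have "\<phi> (c *\<^sub>C v) = (complex_of_real (Re c) + \<i> * complex_of_real (Im c)) * \<phi> v"
      using linear_add[OF bounded_linear.linear[OF \<open>bounded_linear \<phi>\<close>]] by (simp add: algebra_simps)
    then show ?thesis
      by (simp flip: complex_eq)
  qed
  ultimately have "bounded_clinear \<phi>"
    unfolding bounded_clinear_def scaleC_complex_def by blast
  then show ?thesis
    by (simp only: \<phi>_def[abs_def])
qed

lemma exists_bounded_clinear_functional_nonzero:
  fixes x :: "'a::complex_normed_vector"
  assumes "x \<noteq> 0"
  obtains \<phi> :: "'a \<Rightarrow> complex" where "bounded_clinear \<phi>" "\<phi> x \<noteq> 0"
proof -
  obtain \<psi> :: "'a \<Rightarrow> real" where \<psi>: "linear \<psi>" "\<And>v. \<bar>\<psi> v\<bar> \<le> norm v" "\<psi> x = norm x"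
    using exists_norming_functional_real[OF assms] by metis
  have "Re (complex_of_real (\<psi> x) - \<i> * complex_of_real (\<psi> (\<i> *\<^sub>C x))) \<noteq> 0"
    using assms by (simp add: \<psi>(3))
  then show ?thesis
    using that bounded_clinear_complexification[OF \<psi>(1,2)] by force
qed

section \<open>Abel means of null sequences\<close>

lemma summable_power_mult_convergent:
  fixes b :: "nat \<Rightarrow> real"
  assumes "convergent b" "0 \<le> s" "s < 1"
  shows "summable (\<lambda>n. s^n * b n)"
proof -
  obtain B where B: "\<And>n. \<bar>b n\<bar> \<le> B"
    using convergent_imp_Bseq[OF assms(1)] by (auto simp: Bseq_def)
  have "norm (s^n * b n) \<le> B * s^n" for n
    using mult_left_mono[OF B[of n], of "s^n"] assms(2) by (simp add: abs_mult mult.commute)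
  moreover have "summable (\<lambda>n. B * s^n)"
    using assms by (intro summable_mult summable_geometric) simp
  ultimately show ?thesis
    using summable_comparison_test[of "\<lambda>n. s^n * b n" "\<lambda>n. B * s^n"] by blast
qed

lemma abel_mean_le:
  fixes b :: "nat \<Rightarrow> real"
  assumes nonneg: "\<And>n. b n \<ge> 0" and "convergent b" and tail: "\<And>n. n \<ge> N0 \<Longrightarrow> b n \<le> \<epsilon>"
    and s: "0 \<le> s" "s < 1"
  shows "(1 - s) * (\<Sum>n. s^n * b n) \<le> (1 - s) * (\<Sum>n<N0. b n) + \<epsilon>"
proof -
  have "\<epsilon> \<ge> 0"
    using nonneg[of N0] tail[of N0] by simp
  have pointwise: "s^n * b n \<le> (if n < N0 then b n else 0) + \<epsilon> * s^n" for n
  proof (cases "n < N0")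
    case True
    have "s^n * b n \<le> b n"
      using nonneg[of n] s by (simp add: mult_left_le_one_le power_le_one)
    moreover have "0 \<le> \<epsilon> * s^n"
      using s \<open>\<epsilon> \<ge> 0\<close> by simp
    ultimately show ?thesis
      using True by simp
  next
    case False
    then have "s^n * b n \<le> s^n * \<epsilon>"
      using tail[of n] s by (intro mult_left_mono) auto
    then show ?thesis
      using False by (simp add: mult.commute)
  qed
  have "(\<Sum>n<N. s^n * b n) \<le> (\<Sum>n<N0. b n) + \<epsilon> * (1 / (1 - s))" for N
  proof -
    have "(\<Sum>n<N. s^n * b n) \<le> (\<Sum>n<N. (if n < N0 then b n else 0) + \<epsilon> * s^n)"
      using pointwise by (rule sum_mono)
    also have "\<dots> = (\<Sum>n\<in>{..<N} \<inter> {..<N0}. b n) + \<epsilon> * (\<Sum>n<N. s^n)"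
      by (simp add: sum.distrib sum_distrib_left sum.If_cases lessThan_def)
    also have "\<dots> \<le> (\<Sum>n<N0. b n) + \<epsilon> * (1 / (1 - s))"
      using nonneg s \<open>\<epsilon> \<ge> 0\<close>
      by (intro add_mono sum_mono2 mult_left_mono) (auto simp: sum_gp_strict divide_right_mono)
    finally show ?thesis .
  qed
  then have "(\<Sum>n. s^n * b n) \<le> (\<Sum>n<N0. b n) + \<epsilon> * (1 / (1 - s))"
    using s \<open>convergent b\<close> by (intro suminf_le_const summable_power_mult_convergent)
  then have "(1 - s) * (\<Sum>n. s^n * b n) \<le> (1 - s) * ((\<Sum>n<N0. b n) + \<epsilon> * (1 / (1 - s)))"
    using s by (intro mult_left_mono) auto
  also have "\<dots> = (1 - s) * (\<Sum>n<N0. b n) + \<epsilon>"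
    using s by (simp add: distrib_left field_simps)
  finally show ?thesis .
qed

lemma abel_mean_tendsto_0:
  fixes b :: "nat \<Rightarrow> real"
  assumes nonneg: "\<And>n. b n \<ge> 0" and null: "b \<longlonglongrightarrow> 0"
  shows "((\<lambda>s. (1 - s) * (\<Sum>n. s^n * b n)) \<longlongrightarrow> 0) (at_left 1)"
proof (rule tendstoI)
  fix e :: real assume "e > 0"
  then obtain N0 where N0: "\<And>n. n \<ge> N0 \<Longrightarrow> b n \<le> e / 2"
    using LIMSEQ_D[OF null, of "e / 2"] nonneg by (fastforce intro: less_imp_le)
  have "((\<lambda>s. (1 - s) * (\<Sum>n<N0. b n)) \<longlongrightarrow> (1 - 1) * (\<Sum>n<N0. b n)) (at_left 1)"
    by (intro tendsto_intros)
  then have "\<forall>\<^sub>F s in at_left 1. (1 - s) * (\<Sum>n<N0. b n) < e / 2"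
    using \<open>e > 0\<close> by (auto dest: order_tendstoD(2)[of _ 0, where a = "e / 2"])
  moreover have "\<forall>\<^sub>F s in at_left (1::real). s \<in> {0<..<1}"
    by (rule eventually_at_left_real) simp
  ultimately show "\<forall>\<^sub>F s in at_left 1. dist ((1 - s) * (\<Sum>n. s^n * b n)) 0 < e"
  proof eventually_elim
    case (elim s)
    moreover have "0 \<le> (1 - s) * (\<Sum>n. s^n * b n)"
      using elim nonneg convergentI[OF null]
      by (intro mult_nonneg_nonneg suminf_nonneg summable_power_mult_convergent) auto
    ultimately show ?case
      using abel_mean_le[of b N0 "e / 2" s, OF nonneg convergentI[OF null] N0] by auto
  qed
qed

definition two_sided_abel_mean :: "(nat \<Rightarrow> real) \<Rightarrow> (nat \<Rightarrow> real) \<Rightarrow> real \<Rightarrow> real" where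
  "two_sided_abel_mean a b r = (if 1 < r then (1 - inverse r) * (\<Sum>n. inverse r ^ n * a n)
    else if r < 1 then (1 - r) * (\<Sum>n. r ^ n * b n) else 0)"

lemma two_sided_abel_mean_1: "two_sided_abel_mean a b 1 = 0"
  by (simp add: two_sided_abel_mean_def)

lemma isCont_two_sided_abel_mean:
  assumes a: "\<And>n. a n \<ge> 0" "a \<longlonglongrightarrow> 0" and b: "\<And>n. b n \<ge> 0" "b \<longlonglongrightarrow> 0"
  shows "isCont (two_sided_abel_mean a b) 1"
proof -
  have "(two_sided_abel_mean a b \<longlongrightarrow> 0) (at_left 1)"
  proof (rule Lim_transform_eventually)
    show "((\<lambda>r. (1 - r) * (\<Sum>n. r ^ n * b n)) \<longlongrightarrow> 0) (at_left 1)"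
      using b by (rule abel_mean_tendsto_0)
    show "\<forall>\<^sub>F r in at_left 1. (1 - r) * (\<Sum>n. r ^ n * b n) = two_sided_abel_mean a b r"
      by (auto simp: two_sided_abel_mean_def eventually_at_filter)
  qed
  moreover have "(two_sided_abel_mean a b \<longlongrightarrow> 0) (at_right 1)"
  proof (rule Lim_transform_eventually)
    have "filterlim inverse (at_left 1) (at_right (1::real))"
    proof (rule tendsto_imp_filterlim_at_left)
      show "(inverse \<longlongrightarrow> 1) (at_right (1::real))"
        using tendsto_inverse[OF tendsto_ident_at[of 1]] by simp
      show "\<forall>\<^sub>F r in at_right 1. inverse r < (1::real)"
        by (auto simp: eventually_at_filter inverse_less_1_iff)
    qed
    then show "((\<lambda>r. (1 - inverse r) * (\<Sum>n. inverse r ^ n * a n)) \<longlongrightarrow> 0) (at_right 1)"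
      using abel_mean_tendsto_0[OF a] by (rule filterlim_compose[rotated])
    show "\<forall>\<^sub>F r in at_right 1. (1 - inverse r) * (\<Sum>n. inverse r ^ n * a n) = two_sided_abel_mean a b r"
      by (auto simp: two_sided_abel_mean_def eventually_at_filter)
  qed
  ultimately show ?thesis
    by (simp add: isCont_def filterlim_at_split two_sided_abel_mean_1)
qed

section \<open>Holomorphic functions of slow growth near the unit circle\<close>

text \<open>On the circle \<open>|z - c| = s\<close> one has \<open>circle_poly c s z = u (|z|\<^sup>2 - 1)\<close> with \<open>u = (z - c) / s\<close>
  of modulus \<open>1\<close>: the non-holomorphic weight \<open>||z|\<^sup>2 - 1|\<close> becomes the modulus of a polynomial, so it can
  be fed into a Cauchy estimate.\<close>

definition circle_poly :: "complex \<Rightarrow> real \<Rightarrow> complex \<Rightarrow> complex" where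
  "circle_poly c s z = cnj c * (z - c)^2 / of_real s + of_real (cmod c ^ 2 + s^2 - 1) * (z - c) / of_real s
    + of_real s * c"

lemma cmod_circle_poly:
  assumes "s > 0" "cmod (z - c) = s"
  shows "cmod (circle_poly c s z) = \<bar>cmod z ^ 2 - 1\<bar>"
proof -
  define u where "u = (z - c) / s"
  have z: "z = c + s * u"
    using assms(1) by (simp add: u_def)
  have u: "cmod u = 1"
    using assms by (simp add: u_def norm_divide)
  then have uu: "u * cnj u = 1"
    by (simp flip: complex_norm_square)
  have cc: "c * cnj c = cmod c ^ 2" and zz: "z * cnj z = cmod z ^ 2"
    by (simp_all flip: complex_norm_square)
  have P: "circle_poly c s z = cnj c * s * u^2 + (cmod c ^ 2 + s^2 - 1) * u + s * c"
    using assms(1) by (simp add: circle_poly_def z power2_eq_square field_simps)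
  have "z * cnj z = c * cnj c + s * c * cnj u + s * u * cnj c + s^2 * (u * cnj u)"
    by (simp add: z algebra_simps power2_eq_square)
  then have "circle_poly c s z = u * (z * cnj z - 1)"
    unfolding P by (simp add: cc uu algebra_simps power2_eq_square)
  also have "\<dots> = u * of_real (cmod z ^ 2 - 1)"
    by (simp add: zz)
  finally show ?thesis
    by (simp only: norm_mult u norm_of_real) simp
qed

lemma circle_poly_cauchy_estimate:
  fixes g :: "complex \<Rightarrow> complex"
  assumes hol: "g holomorphic_on cball c s" and s: "s > 0"
    and bound: "\<And>z. cmod (z - c) = s \<Longrightarrow> \<bar>cmod z ^ 2 - 1\<bar> * cmod (g z) \<le> B"
  shows "s * cmod c * cmod (g c) \<le> B"
proof -
  define G where "G z = g z * circle_poly c s z" for z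
  have "G holomorphic_on cball c s"
    unfolding G_def circle_poly_def by (intro holomorphic_intros hol) (use s in auto)
  moreover have "cmod (G z) \<le> B" if "cmod (c - z) = s" for z
    using bound[of z] cmod_circle_poly[OF s, of z c] that
    by (simp add: G_def norm_mult norm_minus_commute mult.commute)
  ultimately have "cmod ((deriv ^^ 0) G c) \<le> fact 0 * B / s ^ 0"
    using s by (intro Cauchy_inequality holomorphic_on_imp_continuous_on)
      (auto elim: holomorphic_on_subset)
  then show ?thesis
    using s by (simp add: G_def circle_poly_def norm_mult mult_ac)
qed

lemma cmod_times_z_minus_1_le:
  fixes g :: "complex \<Rightarrow> complex"
  assumes hol: "g holomorphic_on - {1}"
    and bound: "\<And>z. z \<noteq> 1 \<Longrightarrow> cmod (z - 1) < \<eta> \<Longrightarrow> \<bar>cmod z - 1\<bar> * cmod (g z) \<le> \<epsilon>"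
    and c: "c \<noteq> 1" "cmod (c - 1) < min (\<eta> / 2) (1 / 2)"
  shows "cmod ((c - 1) * g c) \<le> 12 * \<epsilon>"
proof -
  define s where "s = cmod (c - 1) / 2"
  have "cmod (c - 1) > 0"
    using c by simp
  then have s: "s > 0" "3 * s < \<eta>" "s < 1 / 4"
    using c unfolding s_def by linarith+
  have near_1: "z \<noteq> 1" "cmod (z - 1) < \<eta>" "cmod z \<le> 2" if "cmod (z - c) \<le> s" for z
  proof -
    have "cmod (c - 1) \<le> cmod (z - c) + cmod (z - 1)" "cmod (z - 1) \<le> cmod (z - c) + cmod (c - 1)"
        "cmod z \<le> 1 + cmod (z - 1)"
      using norm_triangle_ineq4[of "z - 1" "z - c"] norm_triangle_ineq[of "z - c" "c - 1"]
        norm_triangle_ineq[of 1 "z - 1"] by simp_all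
    then have "cmod (z - 1) > 0" "cmod (z - 1) < \<eta>" "cmod z \<le> 2"
      using that s unfolding s_def by linarith+
    then show "z \<noteq> 1" "cmod (z - 1) < \<eta>" "cmod z \<le> 2"
      by auto
  qed
  have "g holomorphic_on cball c s"
    using hol by (rule holomorphic_on_subset) (use near_1 in \<open>auto simp: dist_norm norm_minus_commute\<close>)
  moreover have "\<bar>cmod z ^ 2 - 1\<bar> * cmod (g z) \<le> 3 * \<epsilon>" if "cmod (z - c) = s" for z
  proof -
    have gz: "\<bar>cmod z - 1\<bar> * cmod (g z) \<le> \<epsilon>" and "cmod z \<le> 2"
      using bound[of z] near_1[of z] that by auto
    have "0 \<le> \<epsilon>"
      using gz by (meson order_trans abs_ge_zero mult_nonneg_nonneg norm_ge_zero)
    have "cmod z ^ 2 - 1 = (cmod z - 1) * (cmod z + 1)"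
      by (simp add: power2_eq_square algebra_simps)
    then have "\<bar>cmod z ^ 2 - 1\<bar> * cmod (g z) = (\<bar>cmod z - 1\<bar> * cmod (g z)) * (cmod z + 1)"
      by (simp add: abs_mult)
    also have "\<dots> \<le> \<epsilon> * 3"
      using gz \<open>cmod z \<le> 2\<close> \<open>0 \<le> \<epsilon>\<close> by (intro mult_mono) auto
    finally show ?thesis by simp
  qed
  ultimately have "s * cmod c * cmod (g c) \<le> 3 * \<epsilon>"
    using circle_poly_cauchy_estimate s(1) by blast
  moreover have "cmod c \<ge> 1 / 2"
    using norm_triangle_ineq4[of c "c - 1"] s by (simp add: s_def)
  moreover have "s * (1 / 2) * cmod (g c) \<le> s * cmod c * cmod (g c)"
    using \<open>cmod c \<ge> 1 / 2\<close> s by (intro mult_right_mono mult_left_mono) auto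
  ultimately have "s * cmod (g c) \<le> 6 * \<epsilon>"
    by linarith
  then show ?thesis
    by (simp add: s_def norm_mult)
qed

lemma tendsto_times_z_minus_1_if_unit_circle_growth:
  fixes g :: "complex \<Rightarrow> complex"
  assumes hol: "g holomorphic_on - {1}"
    and growth: "((\<lambda>z. (cmod z - 1) * cmod (g z)) \<longlongrightarrow> 0) (at 1)"
  shows "((\<lambda>z. (z - 1) * g z) \<longlongrightarrow> 0) (at 1)"
proof (rule tendstoI)
  fix e :: real assume "e > 0"
  then have "\<forall>\<^sub>F z in at 1. \<bar>cmod z - 1\<bar> * cmod (g z) < e / 13"
    using tendstoD[OF growth, of "e / 13"] by (simp add: abs_mult)
  then obtain \<eta> where "\<eta> > 0"
    and \<eta>: "\<And>z. z \<noteq> 1 \<Longrightarrow> cmod (z - 1) < \<eta> \<Longrightarrow> \<bar>cmod z - 1\<bar> * cmod (g z) < e / 13"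
    unfolding eventually_at by (auto simp: dist_norm)
  have "cmod ((c - 1) * g c) < e" if "c \<noteq> 1" "cmod (c - 1) < min (\<eta> / 2) (1 / 2)" for c
    using cmod_times_z_minus_1_le[OF hol _ that, of "e / 13"] \<eta> \<open>e > 0\<close> by fastforce
  then show "\<forall>\<^sub>F z in at 1. dist ((z - 1) * g z) 0 < e"
    unfolding eventually_at using \<open>\<eta> > 0\<close> by (auto simp: dist_norm intro!: exI[of _ "min (\<eta> / 2) (1 / 2)"])
qed

lemma holomorphic_zero_if_unit_circle_growth:
  fixes g :: "complex \<Rightarrow> complex"
  assumes hol: "g holomorphic_on - {1}"
    and growth: "((\<lambda>z. (cmod z - 1) * cmod (g z)) \<longlongrightarrow> 0) (at 1)"
    and infinity: "(g \<longlongrightarrow> 0) at_infinity"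
    and "z \<noteq> 1"
  shows "g z = 0"
proof -
  have hol': "g holomorphic_on UNIV - {1}"
    using hol by (simp add: Compl_eq_Diff_UNIV)
  then have "(\<lambda>y. (y - 1) * g y) holomorphic_on UNIV - {1}"
    by (intro holomorphic_intros)
  then have "(\<lambda>y. if y = 1 then 0 else (y - 1) * g y) holomorphic_on UNIV"
    using removable_singularity tendsto_times_z_minus_1_if_unit_circle_growth[OF hol growth] by blast
  then obtain D where "((\<lambda>y. if y = 1 then 0 else (y - 1) * g y) has_field_derivative D) (at 1)"
    unfolding holomorphic_on_def field_differentiable_def by (metis UNIV_I at_within_open open_UNIV)
  then have "((\<lambda>y. ((if y = 1 then 0 else (y - 1) * g y) - 0) / (y - 1)) \<longlongrightarrow> D) (at 1)"
    unfolding has_field_derivative_iff by simp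
  then have "(g \<longlongrightarrow> D) (at 1)"
    by (rule Lim_transform_eventually) (auto simp: eventually_at_filter)
  then have "(\<lambda>y. if y = 1 then D else g y) holomorphic_on UNIV"
    using removable_singularity[OF hol'] by blast
  moreover have "\<forall>\<^sub>F y in at_infinity. g y = (if y = 1 then D else g y)"
    unfolding eventually_at_infinity by (rule exI[of _ 2]) auto
  then have "((\<lambda>y. if y = 1 then D else g y) \<longlongrightarrow> 0) at_infinity"
    using infinity by (rule Lim_transform_eventually[rotated])
  ultimately have "(if z = 1 then D else g z) = 0"
    by (rule Liouville_weak_0)
  then show ?thesis
    using \<open>z \<noteq> 1\<close> by simp
qed

section \<open>The resolvent of an operator with spectrum \<open>{1}\<close>\<close>

text \<open>\<open>resolvent T z\<close> is \<open>(T - z)\<^sup>-\<^sup>1\<close>; for \<open>z\<close> in the spectrum it is an unspecified junk value.\<close>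

definition resolvent :: "('a::complex_normed_vector \<Rightarrow> 'a) \<Rightarrow> complex \<Rightarrow> 'a \<Rightarrow> 'a" where
  "resolvent T z = (SOME S. bounded_clinear S \<and> S \<circ> (\<lambda>x. T x - z *\<^sub>C x) = id \<and> (\<lambda>x. T x - z *\<^sub>C x) \<circ> S = id)"

lemma resolvent_inverse:
  assumes "z \<notin> spectrum T"
  shows "bounded_clinear (resolvent T z)" "resolvent T z (T v - z *\<^sub>C v) = v"
    "T (resolvent T z v) - z *\<^sub>C resolvent T z v = v"
proof -
  have "\<exists>S. bounded_clinear S \<and> S \<circ> (\<lambda>x. T x - z *\<^sub>C x) = id \<and> (\<lambda>x. T x - z *\<^sub>C x) \<circ> S = id"
    using assms unfolding spectrum_def op_invertible_def by blast
  from someI_ex[OF this] show "bounded_clinear (resolvent T z)" "resolvent T z (T v - z *\<^sub>C v) = v"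
    "T (resolvent T z v) - z *\<^sub>C resolvent T z v = v"
    unfolding resolvent_def[symmetric] by (simp_all add: fun_eq_iff)
qed

locale spectrum_one =
  fixes T :: "'a::{complex_normed_vector, banach} \<Rightarrow> 'a"
  assumes bounded_clinear_T: "bounded_clinear T" and spectrum_T: "spectrum T = {1}"
begin

abbreviation R :: "complex \<Rightarrow> 'a \<Rightarrow> 'a" where
  "R \<equiv> resolvent T"

lemma bounded_clinear_R: "z \<noteq> 1 \<Longrightarrow> bounded_clinear (R z)"
  and R_left_inverse: "z \<noteq> 1 \<Longrightarrow> R z (T v - z *\<^sub>C v) = v"
  and R_right_inverse: "z \<noteq> 1 \<Longrightarrow> T (R z v) - z *\<^sub>C R z v = v"
  using resolvent_inverse[of z T] spectrum_T by auto

lemma R_add: "z \<noteq> 1 \<Longrightarrow> R z (v + w) = R z v + R z w"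
  and R_scaleC: "z \<noteq> 1 \<Longrightarrow> R z (c *\<^sub>C v) = c *\<^sub>C R z v"
  using bounded_clinear_imp_linear[OF bounded_clinear_R] bounded_clinear_scaleC[OF bounded_clinear_R]
  by (auto simp: linear_add)

lemma R_comp_T:
  assumes "z \<noteq> 1"
  shows "R z (T w) = w + z *\<^sub>C R z w"
proof -
  have "R z (T w) = R z (T w - z *\<^sub>C w) + R z (z *\<^sub>C w)"
    using R_add[OF assms] by (metis diff_add_cancel)
  then show ?thesis
    using R_left_inverse R_scaleC assms by simp
qed

lemma resolvent_identity:
  assumes a: "a \<noteq> 1" and b: "b \<noteq> 1"
  shows "R b v - R a v = (b - a) *\<^sub>C R b (R a v)"
proof -
  have "T (R a v) - b *\<^sub>C R a v = (T (R a v) - a *\<^sub>C R a v) + (a - b) *\<^sub>C R a v"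
    by (simp add: scaleC_diff_left)
  also have "\<dots> = v + (a - b) *\<^sub>C R a v"
    using R_right_inverse[OF a] by simp
  finally have "R a v = R b v + (a - b) *\<^sub>C R b (R a v)"
    using R_left_inverse[OF b, of "R a v"] by (simp add: R_add R_scaleC b)
  moreover have "(b - a) *\<^sub>C R b (R a v) = - ((a - b) *\<^sub>C R b (R a v))"
    using scaleC_minus_left[of "a - b"] by simp
  ultimately show ?thesis
    by (simp add: algebra_simps)
qed

lemma R_bounded:
  assumes "z \<noteq> 1"
  obtains K where "K > 0" "\<And>w. norm (R z w) \<le> K * norm w"
  using bounded_linear.pos_bounded[of "R z"] bounded_clinear_R[OF assms]
  by (metis bounded_clinear_imp_bounded_linear mult.commute)

lemma norm_R_near:
  assumes a: "a \<noteq> 1" and b: "b \<noteq> 1" and K: "\<And>w. norm (R a w) \<le> K * norm w"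
    and small: "cmod (b - a) * K \<le> 1/2"
  shows "norm (R b v) \<le> 2 * K * norm v"
proof -
  have "R b v = R a v - (a - b) *\<^sub>C R a (R b v)"
    using resolvent_identity[OF b a, of v] by (simp add: algebra_simps)
  then have "norm (R b v) \<le> norm (R a v) + cmod (b - a) * norm (R a (R b v))"
    using norm_triangle_ineq4 by (metis norm_scaleC norm_minus_commute)
  also have "\<dots> \<le> K * norm v + cmod (b - a) * (K * norm (R b v))"
    using K by (intro add_mono mult_left_mono) auto
  also have "\<dots> \<le> K * norm v + 1/2 * norm (R b v)"
    using mult_right_mono[OF small norm_ge_zero[of "R b v"]] by (simp add: mult.assoc)
  finally show ?thesis
    by simp
qed

lemma tendsto_R:
  assumes a: "a \<noteq> 1"
  shows "((\<lambda>y. R y w) \<longlongrightarrow> R a w) (at a)"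
proof -
  obtain K where K: "K > 0" "\<And>w. norm (R a w) \<le> K * norm w"
    using R_bounded[OF a] by blast
  have "((\<lambda>y. cmod (y - a) * K) \<longlongrightarrow> cmod (a - a) * K) (at a)"
    by (intro tendsto_intros)
  then have "\<forall>\<^sub>F y in at a. cmod (y - a) * K < 1/2"
    by (auto dest: order_tendstoD(2)[where a = "1/2"])
  moreover have "\<forall>\<^sub>F y in at a. y \<noteq> 1"
    by (rule eventually_neq_at_within)
  ultimately have "\<forall>\<^sub>F y in at a. norm (R y w - R a w) \<le> cmod (y - a) * (2 * K * norm (R a w))"
  proof eventually_elim
    case (elim y)
    then show ?case
      using resolvent_identity[OF a, of y w] norm_R_near[OF a _ K(2), of y "R a w"]
      by (auto simp: norm_scaleC intro: mult_left_mono)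
  qed
  moreover have "((\<lambda>y. cmod (y - a) * (2 * K * norm (R a w))) \<longlongrightarrow> cmod (a - a) * (2 * K * norm (R a w))) (at a)"
    by (intro tendsto_intros)
  ultimately have "((\<lambda>y. R y w - R a w) \<longlongrightarrow> 0) (at a)"
    using Lim_null_comparison by auto
  then show ?thesis
    by (rule LIM_zero_cancel)
qed

lemma holomorphic_functional_R:
  fixes \<phi> :: "'a \<Rightarrow> complex"
  assumes \<phi>: "bounded_clinear \<phi>"
  shows "(\<lambda>z. \<phi> (R z x)) holomorphic_on - {1}"
proof -
  have lin: "linear \<phi>"
    using \<phi> by (rule bounded_clinear_imp_linear)
  have "((\<lambda>z. \<phi> (R z x)) has_field_derivative \<phi> (R a (R a x))) (at a)" if a: "a \<noteq> 1" for a
  proof -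
    have "((\<lambda>y. \<phi> (R y (R a x))) \<longlongrightarrow> \<phi> (R a (R a x))) (at a)"
      using bounded_clinear_imp_bounded_linear[OF \<phi>] tendsto_R[OF a] by (rule bounded_linear.tendsto)
    moreover have "\<forall>\<^sub>F y in at a. y \<noteq> 1 \<and> y \<noteq> a"
      using eventually_neq_at_within[of 1 a UNIV] eventually_neq_at_within[of a a UNIV]
      by (rule eventually_conj)
    then have "\<forall>\<^sub>F y in at a. \<phi> (R y (R a x)) = (\<phi> (R y x) - \<phi> (R a x)) / (y - a)"
    proof eventually_elim
      case (elim y)
      have "\<phi> (R y x) - \<phi> (R a x) = \<phi> (R y x - R a x)"
        by (rule linear_diff[OF lin, symmetric])
      also have "\<dots> = (y - a) * \<phi> (R y (R a x))"
        using resolvent_identity[OF a, of y x] elim bounded_clinear_scaleC[OF \<phi>]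
        by (simp add: scaleC_complex_def)
      finally show ?case
        using elim by simp
    qed
    ultimately show ?thesis
      unfolding has_field_derivative_iff by (rule Lim_transform_eventually)
  qed
  then show ?thesis
    unfolding holomorphic_on_open[OF open_Compl[OF closed_singleton]] by blast
qed

lemma norm_R_far:
  assumes B: "\<And>v. norm (T v) \<le> B * norm v" and "z \<noteq> 1"
  shows "(cmod z - B) * norm (R z v) \<le> norm v"
proof -
  have "z *\<^sub>C R z v = T (R z v) - v"
    using R_right_inverse[OF \<open>z \<noteq> 1\<close>, of v] by (simp add: algebra_simps)
  then have "cmod z * norm (R z v) = norm (T (R z v) - v)"
    by (metis norm_scaleC)
  also have "\<dots> \<le> B * norm (R z v) + norm v"
    using B[of "R z v"] norm_triangle_ineq4[of "T (R z v)" v] by simp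
  finally show ?thesis
    by (simp add: algebra_simps)
qed

lemma tendsto_R_at_infinity: "((\<lambda>z. R z v) \<longlongrightarrow> 0) at_infinity"
proof -
  obtain B where "B > 0" and B: "\<And>v. norm (T v) \<le> norm v * B"
    using bounded_linear.pos_bounded[OF bounded_clinear_imp_bounded_linear[OF bounded_clinear_T]]
    by blast
  have "norm (R z v) \<le> norm v * inverse (- B + cmod z)" if z: "B + 1 \<le> cmod z" for z
  proof -
    have "z \<noteq> 1"
      using z \<open>B > 0\<close> by auto
    then have "(- B + cmod z) * norm (R z v) \<le> norm v"
      using norm_R_far[of B z v] B by (simp add: mult.commute)
    moreover have "- B + cmod z > 0"
      using z by simp
    ultimately show ?thesis
      by (simp add: pos_le_divide_eq mult.commute flip: divide_inverse)
  qed
  then have "\<forall>\<^sub>F z in at_infinity. norm (R z v) \<le> norm v * inverse (- B + cmod z)"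
    unfolding eventually_at_infinity by blast
  moreover have "filterlim (\<lambda>z::complex. - B + cmod z) at_top at_infinity"
    using filterlim_at_infinity_imp_norm_at_top[OF filterlim_ident]
    by (rule filterlim_tendsto_add_at_top[OF tendsto_const])
  then have "((\<lambda>z. inverse (- B + cmod z)) \<longlongrightarrow> 0) at_infinity"
    by (rule tendsto_inverse_0_at_top)
  then have "((\<lambda>z. norm v * inverse (- B + cmod z)) \<longlongrightarrow> norm v * 0) at_infinity"
    by (rule tendsto_mult[OF tendsto_const])
  ultimately show ?thesis
    using Lim_null_comparison by force
qed

lemma inv_T_eq_R_0: "inv T = R 0"
proof (rule inv_unique_comp)
  show "R 0 \<circ> T = id" "T \<circ> R 0 = id"
    using R_left_inverse[of 0] R_right_inverse[of 0] by (simp_all add: fun_eq_iff)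
qed

lemma R_expansion_outside:
  assumes "z \<noteq> 1" "z \<noteq> 0"
  shows "(\<Sum>n<N. inverse z ^ Suc n *\<^sub>C (T ^^ n) x) = inverse z ^ N *\<^sub>C R z ((T ^^ N) x) - R z x"
proof (induction N)
  case 0
  then show ?case
    by (simp add: scaleC_one)
next
  case (Suc N)
  have "inverse z ^ Suc N * z = inverse z ^ N"
    using assms(2) by simp
  then have "inverse z ^ Suc N *\<^sub>C R z ((T ^^ Suc N) x)
      = inverse z ^ Suc N *\<^sub>C (T ^^ N) x + inverse z ^ N *\<^sub>C R z ((T ^^ N) x)"
    using assms(1) by (simp add: R_comp_T scaleC_add_right scaleC_scaleC del: power_Suc)
  with Suc show ?case
    by (simp add: algebra_simps)
qed

lemma R_expansion_inside:
  assumes "z \<noteq> 1"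
  shows "(\<Sum>n<N. z ^ n *\<^sub>C (R 0 ^^ Suc n) x) = R z x - z ^ N *\<^sub>C R z ((R 0 ^^ N) x)"
proof (induction N)
  case 0
  then show ?case
    by (simp add: scaleC_one)
next
  case (Suc N)
  have "R z ((R 0 ^^ N) x) = R z (T ((R 0 ^^ Suc N) x))"
    using R_right_inverse[of 0] by simp
  then have "z ^ N *\<^sub>C R z ((R 0 ^^ N) x)
      = z ^ N *\<^sub>C (R 0 ^^ Suc N) x + z ^ Suc N *\<^sub>C R z ((R 0 ^^ Suc N) x)"
    using assms by (simp add: R_comp_T scaleC_add_right scaleC_scaleC mult.commute)
  with Suc show ?case
    by (simp add: algebra_simps)
qed

lemma power_scaleC_R_tendsto_0:
  assumes "z \<noteq> 1" "cmod w \<le> 1" "y \<longlonglongrightarrow> 0"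
  shows "(\<lambda>n. w ^ n *\<^sub>C R z (y n)) \<longlonglongrightarrow> 0"
proof (rule Lim_null_comparison)
  have "cmod w ^ n * norm (R z (y n)) \<le> norm (R z (y n))" for n
    using assms(2) by (intro mult_left_le_one_le) (auto intro: power_le_one)
  then show "\<forall>\<^sub>F n in sequentially. norm (w ^ n *\<^sub>C R z (y n)) \<le> norm (R z (y n))"
    by (simp add: norm_scaleC norm_power)
  have "(\<lambda>n. R z (y n)) \<longlonglongrightarrow> 0"
    using bounded_clinear_imp_bounded_linear[OF bounded_clinear_R[OF assms(1)]] assms(3)
    by (rule bounded_linear.tendsto_zero)
  then show "(\<lambda>n. norm (R z (y n))) \<longlonglongrightarrow> 0"
    by (rule tendsto_norm_zero)
qed

lemma sums_R_outside:
  assumes "cmod z > 1" "(\<lambda>n. (T ^^ n) x) \<longlonglongrightarrow> 0"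
  shows "(\<lambda>n. inverse z ^ Suc n *\<^sub>C (T ^^ n) x) sums (- R z x)"
proof -
  have "z \<noteq> 1" "z \<noteq> 0" "cmod (inverse z) \<le> 1"
    using assms(1) by (auto simp: norm_inverse inverse_le_1_iff)
  then have "(\<lambda>N. inverse z ^ N *\<^sub>C R z ((T ^^ N) x) - R z x) \<longlonglongrightarrow> 0 - R z x"
    using assms(2) by (intro tendsto_diff power_scaleC_R_tendsto_0 tendsto_const)
  then show ?thesis
    unfolding sums_def R_expansion_outside[OF \<open>z \<noteq> 1\<close> \<open>z \<noteq> 0\<close>] by simp
qed

lemma sums_R_inside:
  assumes "cmod z < 1" "(\<lambda>n. (R 0 ^^ n) x) \<longlonglongrightarrow> 0"
  shows "(\<lambda>n. z ^ n *\<^sub>C (R 0 ^^ Suc n) x) sums R z x"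
proof -
  have "z \<noteq> 1"
    using assms(1) by auto
  then have "(\<lambda>N. R z x - z ^ N *\<^sub>C R z ((R 0 ^^ N) x)) \<longlonglongrightarrow> R z x - 0"
    using assms by (intro tendsto_diff power_scaleC_R_tendsto_0 tendsto_const) auto
  then show ?thesis
    unfolding sums_def R_expansion_inside[OF \<open>z \<noteq> 1\<close>] by simp
qed

lemma norm_R_outside:
  assumes "cmod z > 1" "(\<lambda>n. (T ^^ n) x) \<longlonglongrightarrow> 0"
  shows "norm (R z x) \<le> inverse (cmod z) * (\<Sum>n. inverse (cmod z) ^ n * norm ((T ^^ n) x))"
proof -
  define s where "s = inverse (cmod z)"
  have s: "0 \<le> s" "s < 1"
    using assms(1) by (auto simp: s_def inverse_less_1_iff)
  have norms: "norm (inverse z ^ Suc n *\<^sub>C (T ^^ n) x) = s * (s ^ n * norm ((T ^^ n) x))" for n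
    by (simp add: s_def norm_scaleC norm_power norm_inverse norm_mult del: power_Suc)
      (simp add: mult.assoc)
  have "convergent (\<lambda>n. norm ((T ^^ n) x))"
    using assms(2) by (rule convergentI[OF tendsto_norm_zero])
  then have "summable (\<lambda>n. s ^ n * norm ((T ^^ n) x))"
    using s by (rule summable_power_mult_convergent)
  then have "summable (\<lambda>n. norm (inverse z ^ Suc n *\<^sub>C (T ^^ n) x))"
    unfolding norms by (rule summable_mult)
  then have "norm (\<Sum>n. inverse z ^ Suc n *\<^sub>C (T ^^ n) x) \<le> (\<Sum>n. s * (s ^ n * norm ((T ^^ n) x)))"
    unfolding norms[symmetric] by (rule summable_norm)
  then have "norm (- R z x) \<le> (\<Sum>n. s * (s ^ n * norm ((T ^^ n) x)))"
    by (simp only: sums_unique[OF sums_R_outside[OF assms], symmetric])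
  also have "\<dots> = s * (\<Sum>n. s ^ n * norm ((T ^^ n) x))"
    using \<open>summable (\<lambda>n. s ^ n * norm ((T ^^ n) x))\<close> by (rule suminf_mult)
  finally show ?thesis
    by (simp add: s_def)
qed

lemma norm_R_inside:
  assumes "cmod z < 1" "(\<lambda>n. (R 0 ^^ n) x) \<longlonglongrightarrow> 0"
  shows "norm (R z x) \<le> (\<Sum>n. cmod z ^ n * norm ((R 0 ^^ Suc n) x))"
proof -
  have norms: "norm (z ^ n *\<^sub>C (R 0 ^^ Suc n) x) = cmod z ^ n * norm ((R 0 ^^ Suc n) x)" for n
    by (simp add: norm_scaleC norm_power)
  have "(\<lambda>n. (R 0 ^^ Suc n) x) \<longlonglongrightarrow> 0"
    using LIMSEQ_Suc[OF assms(2)] by simp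
  then have "convergent (\<lambda>n. norm ((R 0 ^^ Suc n) x))"
    by (rule convergentI[OF tendsto_norm_zero])
  then have "summable (\<lambda>n. norm (z ^ n *\<^sub>C (R 0 ^^ Suc n) x))"
    unfolding norms using assms(1) by (intro summable_power_mult_convergent) auto
  then have "norm (\<Sum>n. z ^ n *\<^sub>C (R 0 ^^ Suc n) x) \<le> (\<Sum>n. cmod z ^ n * norm ((R 0 ^^ Suc n) x))"
    unfolding norms[symmetric] by (rule summable_norm)
  then show ?thesis
    by (simp only: sums_unique[OF sums_R_inside[OF assms], symmetric])
qed

lemma unit_circle_weight_R_le:
  assumes T_decay: "(\<lambda>n. (T ^^ n) x) \<longlonglongrightarrow> 0" and R0_decay: "(\<lambda>n. (R 0 ^^ n) x) \<longlonglongrightarrow> 0"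
  shows "\<bar>cmod z - 1\<bar> * norm (R z x)
    \<le> two_sided_abel_mean (\<lambda>n. norm ((T ^^ n) x)) (\<lambda>n. norm ((R 0 ^^ Suc n) x)) (cmod z)"
proof -
  consider "cmod z > 1" | "cmod z < 1" | "cmod z = 1"
    by linarith
  then show ?thesis
  proof cases
    case 1
    let ?S = "\<Sum>n. inverse (cmod z) ^ n * norm ((T ^^ n) x)"
    have "(cmod z - 1) * norm (R z x) \<le> (cmod z - 1) * (inverse (cmod z) * ?S)"
      using 1 norm_R_outside[OF 1 T_decay] by (intro mult_left_mono) auto
    also have "\<dots> = (1 - inverse (cmod z)) * ?S"
      using 1 by (simp only: mult.assoc [symmetric] left_diff_distrib right_inverse)
    finally show ?thesis
      using 1 by (simp add: two_sided_abel_mean_def)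
  next
    case 2
    then show ?thesis
      using norm_R_inside[OF 2 R0_decay] unfolding two_sided_abel_mean_def by (auto intro: mult_left_mono)
  qed (simp add: two_sided_abel_mean_def)
qed

lemma R_unit_circle_growth:
  assumes T_decay: "(\<lambda>n. (T ^^ n) x) \<longlonglongrightarrow> 0" and R0_decay: "(\<lambda>n. (R 0 ^^ n) x) \<longlonglongrightarrow> 0"
  shows "((\<lambda>z. (cmod z - 1) * norm (R z x)) \<longlongrightarrow> 0) (at 1)"
proof -
  let ?\<beta> = "two_sided_abel_mean (\<lambda>n. norm ((T ^^ n) x)) (\<lambda>n. norm ((R 0 ^^ Suc n) x))"
  have "isCont ?\<beta> 1"
    using tendsto_norm_zero[OF T_decay] tendsto_norm_zero[OF LIMSEQ_Suc[OF R0_decay]]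
    by (intro isCont_two_sided_abel_mean) simp_all
  moreover have "((\<lambda>z. cmod z) \<longlongrightarrow> 1) (at (1::complex))"
    using tendsto_norm[OF tendsto_ident_at[of "1::complex" UNIV]] by simp
  ultimately have "((\<lambda>z. ?\<beta> (cmod z)) \<longlongrightarrow> ?\<beta> 1) (at (1::complex))"
    by (rule isCont_tendsto_compose)
  then have "((\<lambda>z. ?\<beta> (cmod z)) \<longlongrightarrow> 0) (at (1::complex))"
    by (simp only: two_sided_abel_mean_1)
  moreover have "\<forall>\<^sub>F z in at 1. norm ((cmod z - 1) * norm (R z x)) \<le> ?\<beta> (cmod z)"
    using unit_circle_weight_R_le[OF assms] by (simp add: abs_mult)
  ultimately show ?thesis
    by (rule Lim_null_comparison[rotated])
qed

lemma functional_R_unit_circle_growth: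
  fixes \<phi> :: "'a \<Rightarrow> complex"
  assumes \<phi>: "bounded_clinear \<phi>"
    and decay: "(\<lambda>n. (T ^^ n) x) \<longlonglongrightarrow> 0" "(\<lambda>n. (R 0 ^^ n) x) \<longlonglongrightarrow> 0"
  shows "((\<lambda>z. (cmod z - 1) * cmod (\<phi> (R z x))) \<longlongrightarrow> 0) (at 1)"
proof -
  obtain C where C: "\<And>v. cmod (\<phi> v) \<le> norm v * C"
    using bounded_linear.pos_bounded[OF bounded_clinear_imp_bounded_linear[OF \<phi>]] by blast
  have "\<bar>cmod z - 1\<bar> * cmod (\<phi> (R z x)) \<le> \<bar>cmod z - 1\<bar> * (norm (R z x) * C)" for z
    using C by (rule mult_left_mono) simp
  then have "\<forall>\<^sub>F z in at 1. norm ((cmod z - 1) * cmod (\<phi> (R z x))) \<le> norm ((cmod z - 1) * norm (R z x)) * C"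
    by (simp add: abs_mult mult.assoc)
  moreover have "((\<lambda>z. norm ((cmod z - 1) * norm (R z x)) * C) \<longlongrightarrow> 0) (at 1)"
    using tendsto_mult_left_zero[OF tendsto_norm_zero[OF R_unit_circle_growth[OF decay]]] .
  ultimately show ?thesis
    by (rule Lim_null_comparison)
qed

lemma functional_zero_if_vanishes_on_R:
  fixes \<phi> :: "'a \<Rightarrow> complex"
  assumes \<phi>: "bounded_clinear \<phi>" and vanish: "\<And>z. z \<noteq> 1 \<Longrightarrow> \<phi> (R z x) = 0"
  shows "\<phi> x = 0"
proof -
  have lin: "linear \<phi>"
    using \<phi> by (rule bounded_clinear_imp_linear)
  have "\<phi> x = \<phi> (T (R z x))" if "z \<noteq> 1" for z
  proof -
    have "\<phi> x = \<phi> (T (R z x) - z *\<^sub>C R z x)"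
      using R_right_inverse[OF that, of x] by simp
    also have "\<dots> = \<phi> (T (R z x)) - z *\<^sub>C \<phi> (R z x)"
      using bounded_clinear_scaleC[OF \<phi>] by (simp add: linear_diff[OF lin])
    finally show ?thesis
      using vanish[OF that] by (simp add: scaleC_complex_def)
  qed
  moreover have "z \<noteq> 1" if "2 \<le> cmod z" for z
    using that by auto
  ultimately have "\<forall>\<^sub>F z in at_infinity. \<phi> (T (R z x)) = \<phi> x"
    unfolding eventually_at_infinity by (metis (full_types))
  moreover have "((\<lambda>z. \<phi> (T (R z x))) \<longlongrightarrow> 0) at_infinity"
    using bounded_clinear_imp_bounded_linear[OF bounded_clinear_compose[OF \<phi> bounded_clinear_T]]
      tendsto_R_at_infinity by (rule bounded_linear.tendsto_zero)
  ultimately have "((\<lambda>z::complex. \<phi> x) \<longlongrightarrow> 0) at_infinity"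
    by (rule Lim_transform_eventually[rotated])
  then show ?thesis
    using tendsto_const_iff[OF trivial_limit_at_infinity] by blast
qed

lemma decaying_both_ways_eq_0:
  assumes "x \<in> decay_set T" "x \<in> decay_set (inv T)"
  shows "x = 0"
proof (rule ccontr)
  assume "x \<noteq> 0"
  then obtain \<phi> :: "'a \<Rightarrow> complex" where \<phi>: "bounded_clinear \<phi>" "\<phi> x \<noteq> 0"
    by (rule exists_bounded_clinear_functional_nonzero)
  have decay: "(\<lambda>n. (T ^^ n) x) \<longlonglongrightarrow> 0" "(\<lambda>n. (R 0 ^^ n) x) \<longlonglongrightarrow> 0"
    using assms by (simp_all add: decay_set_def inv_T_eq_R_0)
  have "((\<lambda>z. \<phi> (R z x)) \<longlongrightarrow> 0) at_infinity"
    using bounded_clinear_imp_bounded_linear[OF \<phi>(1)] tendsto_R_at_infinity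
    by (rule bounded_linear.tendsto_zero)
  then have "\<phi> (R z x) = 0" if "z \<noteq> 1" for z
    using holomorphic_zero_if_unit_circle_growth holomorphic_functional_R[OF \<phi>(1)]
      functional_R_unit_circle_growth[OF \<phi>(1) decay] that by blast
  then show False
    using functional_zero_if_vanishes_on_R[OF \<phi>(1)] \<phi>(2) by blast
qed

end

lemma zero_in_decay_set:
  assumes "linear S"
  shows "0 \<in> decay_set S"
proof -
  have "(S ^^ n) 0 = 0" for n
    using assms by (induction n) (simp_all add: linear_0)
  then show ?thesis
    by (simp add: decay_set_def)
qed

theorem lemma3p1:
  fixes T :: "'a::{complex_normed_vector, banach} \<Rightarrow> 'a"
  assumes "bounded_clinear T"
    and "spectrum T = {1}"
  shows "decay_set T \<inter> decay_set (inv T) = {0}"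
proof -
  interpret spectrum_one T
    using assms by unfold_locales
  have "linear T" "linear (inv T)"
    using bounded_clinear_T bounded_clinear_R[of 0]
    by (simp_all add: inv_T_eq_R_0 bounded_clinear_imp_linear)
  then show ?thesis
    using decaying_both_ways_eq_0 zero_in_decay_set by blast
qed

end
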